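(* For every integer $n\ge 0$, $c_9(n)$ is odd if $n=(5j^2+j)/2$ for some $j\in\mathbb{Z}$, and $c_9(n)$ is even otherwise.
   Context: A partition of $n\ge 0$ is a finite multiset of positive integers summing to $n$; the empty partition is the partition of $0$. For $n\ge 0$, $c_9(n)$ denotes the number of partitions $\lambda$ of $n$ such that either (a) all parts of $\lambda$ are distinct and greater than $1$, or (b) there is an integer $j\ge 2$ such that the part $1$ appears exactly $j^2$ times and every other part of $\lambda$ is at least $j+1$ and appears at most once. *)

theory Defs
  imports Main "HOL-Library.Multiset"
begin

definition is_partition :: "nat multiset \<Rightarrow> nat \<Rightarrow> bool" where
  "is_partition p n \<longleftrightarrow> (\<forall>x\<in>#p. 0 < x) \<and> sum_mset p = n"

definition c9_cond_a :: "nat multiset \<Rightarrow> bool" where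
  "c9_cond_a p \<longleftrightarrow> (\<forall>x\<in>#p. 1 < x \<and> count p x = 1)"

definition c9_cond_b :: "nat multiset \<Rightarrow> bool" where
  "c9_cond_b p \<longleftrightarrow> (\<exists>j::nat. 2 \<le> j \<and> count p 1 = j^2 \<and>
      (\<forall>x\<in>#p. x \<noteq> 1 \<longrightarrow> j + 1 \<le> x \<and> count p x \<le> 1))"

definition c9 :: "nat \<Rightarrow> nat" where
  "c9 n = card {p. is_partition p n \<and> (c9_cond_a p \<or> c9_cond_b p)}"

end

theory Submission
  imports Defs "HOL-Computational_Algebra.Polynomial"
begin

text \<open>A set \<open>X\<close> of distinct parts greater than \<open>j\<close> with \<open>j^2 + \<Sum>X = n\<close> is, for \<open>j \<ge> 2\<close>, the same
  as a partition of type (b). For \<open>j = 0\<close> such sets either avoid the part 1, giving the partitions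
  of type (a), or contain it, and removing 1 is then a bijection onto the sets for \<open>j = 1\<close>. Hence
  \<open>c9 n\<close> has the parity of the number of all pairs \<open>(j, X)\<close>, which is also the parity of their
  count with signs \<open>(-1)^card X\<close>. The signed count is the coefficient of \<open>q^n\<close> in
  \<open>\<Sum>j. q^(j^2) (q^(j+1);q)_(n-j) (q^(n-j+1);q)_(n+j)\<close>, the last factor being irrelevant below
  \<open>q^(n+1)\<close>. Applying Bailey's lemma twice to the unit Bailey pair gives the finite
  Rogers--Ramanujan identity, by which this coefficient is also that of \<open>q^n\<close> in
  \<open>\<Sum>r. q^(2r^2) \<alpha>_r\<close> with \<open>\<alpha>_r = (-1)^r (q^(r(r-1)/2) + q^(r(r+1)/2))\<close>: it is \<open>\<plusminus>1\<close> when
  \<open>2n = 5j^2 + j\<close> for an integer \<open>j\<close>, and \<open>0\<close> otherwise.\<close>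

fun tri :: "nat \<Rightarrow> nat" where
  "tri 0 = 0" | "tri (Suc k) = tri k + k"

lemma tri_add: "tri (a + b) = tri a + tri b + a * b"
  by (induction b) (auto simp: algebra_simps)

lemma tri_double: "2 * tri r + r = r * r"
  by (induction r) (auto simp: algebra_simps)

text \<open>\<open>qpoch q s m\<close> is \<open>(q^s;q)_m\<close> and \<open>qfact q k\<close> is \<open>(q;q)_k\<close>. Identities involving division are
  proved for \<open>0 < q < 1\<close>, where \<open>(q;q)_k > 0\<close>.\<close>

definition qpoch :: "real \<Rightarrow> nat \<Rightarrow> nat \<Rightarrow> real" where
  "qpoch q s m = (\<Prod>i\<in>{s..<s+m}. 1 - q^i)"

definition qfact :: "real \<Rightarrow> nat \<Rightarrow> real" where
  "qfact q k = qpoch q 1 k"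

lemma qpoch_0 [simp]: "qpoch q s 0 = 1"
  by (simp add: qpoch_def)

lemma qpoch_Suc: "qpoch q s (Suc m) = qpoch q s m * (1 - q^(s + m))"
  by (simp add: qpoch_def)

lemma qpoch_Suc_left: "qpoch q s (Suc m) = (1 - q^s) * qpoch q (Suc s) m"
proof -
  have "{s..<s + Suc m} = insert s {Suc s..<Suc s + m}" by auto
  then show ?thesis by (simp add: qpoch_def)
qed

lemma qpoch_add: "qpoch q s (a + b) = qpoch q s a * qpoch q (s + a) b"
  by (induction b) (simp_all add: qpoch_Suc add.assoc)

lemma qfact_0 [simp]: "qfact q 0 = 1"
  by (simp add: qfact_def)

lemma qfact_Suc: "qfact q (Suc k) = qfact q k * (1 - q^Suc k)"
  by (simp add: qfact_def qpoch_Suc)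

lemma qfact_pos:
  assumes "0 < q" "q < 1"
  shows "0 < qfact q k"
  unfolding qfact_def qpoch_def
proof (rule prod_pos)
  fix i assume "i \<in> {1..<1+k}"
  then have "q^i < 1" using assms by (simp add: power_less_one_iff)
  then show "0 < 1 - q^i" by simp
qed

lemma qpoch_eq_qfact_div:
  assumes "0 < q" "q < 1"
  shows "qpoch q (Suc a) b = qfact q (a + b) / qfact q a"
  using qpoch_add[of q 1 a b] qfact_pos[OF assms, of a] by (simp add: qfact_def field_simps)

subsection \<open>Gaussian binomial coefficients\<close>

fun qbinom :: "real \<Rightarrow> nat \<Rightarrow> nat \<Rightarrow> real" where
  "qbinom q m 0 = 1"
| "qbinom q 0 (Suc i) = 0"
| "qbinom q (Suc m) (Suc i) = qbinom q m i + q^(Suc i) * qbinom q m (Suc i)"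

lemma qbinom_eq_0: "m < i \<Longrightarrow> qbinom q m i = 0"
proof (induction m arbitrary: i)
  case 0 then show ?case by (cases i) auto
next
  case (Suc m) then show ?case by (cases i) auto
qed

lemma qbinom_diag [simp]: "qbinom q m m = 1"
  by (induction m) (auto simp: qbinom_eq_0)

lemma qbinom_mult_qfact:
  "i \<le> m \<Longrightarrow> qbinom q m i * qfact q i * qfact q (m - i) = qfact q m"
proof (induction m arbitrary: i)
  case 0 then show ?case by simp
next
  case (Suc m)
  show ?case
  proof (cases i)
    case 0 then show ?thesis by simp
  next
    case (Suc k)
    show ?thesis
    proof (cases "k = m")
      case True then show ?thesis using Suc by simp
    next
      case False
      then have km: "k < m" using Suc \<open>i \<le> Suc m\<close> by simp
      have IH1: "qbinom q m k * qfact q k * qfact q (m - k) = qfact q m"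
        using Suc.IH km by simp
      have IH2: "qbinom q m (Suc k) * qfact q (Suc k) * qfact q (m - Suc k) = qfact q m"
        using Suc.IH km by simp
      have split: "qfact q (m - k) = qfact q (m - Suc k) * (1 - q^(m - k))"
        using km qfact_Suc[of q "m - Suc k"] by (simp add: Suc_diff_Suc)
      have pow: "q^k * q^(m - k) = q^m"
        using km by (simp flip: power_add)
      have "qbinom q (Suc m) i * qfact q i * qfact q (Suc m - i)
          = (qbinom q m k * qfact q k * qfact q (m - k)) * (1 - q^Suc k)
            + q^Suc k * (qbinom q m (Suc k) * qfact q (Suc k) * qfact q (m - Suc k)) * (1 - q^(m - k))"
        using Suc by (simp add: split qfact_Suc algebra_simps)
      also have "\<dots> = qfact q m * ((1 - q^Suc k) + (q^Suc k - q^Suc k * q^(m - k)))"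
        by (simp only: IH1 IH2) (simp add: algebra_simps)
      finally show ?thesis by (simp add: qfact_Suc mult.assoc pow)
    qed
  qed
qed

lemma qbinom_eq:
  assumes "0 < q" "q < 1" "s \<le> N"
  shows "qbinom q N s = qfact q N / (qfact q s * qfact q (N - s))"
  using qbinom_mult_qfact[OF assms(3), of q] qfact_pos[OF assms(1,2), of s]
    qfact_pos[OF assms(1,2), of "N - s"]
  by (simp add: field_simps)

lemma qbinom_symmetric:
  assumes "0 < q" "q < 1" "s \<le> N"
  shows "qbinom q N (N - s) = qbinom q N s"
  using qbinom_eq[OF assms] qbinom_eq[OF assms(1,2), of "N - s" N] assms(3)
  by (simp add: mult.commute)

theorem qbinomial_theorem:
  "(\<Prod>i<N. 1 - z * q^i) = (\<Sum>s\<le>N. (-1)^s * q^(tri s) * qbinom q N s * z^s)"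
proof (induction N arbitrary: z)
  case 0 then show ?case by simp
next
  case (Suc N)
  define A where "A s = (-1)^s * q^(tri s) * qbinom q N s * z^s * q^s" for s
  have "(\<Prod>i<Suc N. 1 - z * q^i) = (1 - z) * (\<Prod>i<N. 1 - (z * q) * q^i)"
    by (subst prod.lessThan_Suc_shift) (simp add: mult.assoc)
  also have "\<dots> = (\<Sum>s\<le>N. A s) - (\<Sum>s\<le>N. z * A s)"
    using Suc.IH[of "z * q"]
    by (simp add: A_def power_mult_distrib mult_ac left_diff_distrib sum_distrib_left sum_subtractf)
  finally have lhs: "(\<Prod>i<Suc N. 1 - z * q^i) = (\<Sum>s\<le>N. A s) - (\<Sum>s\<le>N. z * A s)" .
  have "(\<Sum>s\<le>Suc N. (-1)^s * q^(tri s) * qbinom q (Suc N) s * z^s)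
      = 1 + (\<Sum>s\<le>N. (-1)^Suc s * q^(tri (Suc s)) * qbinom q (Suc N) (Suc s) * z^Suc s)"
    by (subst sum.atMost_Suc_shift) simp
  also have "\<dots> = 1 + (\<Sum>s\<le>N. - (z * A s) + A (Suc s))"
    by (intro arg_cong2[where f="(+)"] refl sum.cong) (auto simp: A_def algebra_simps power_add)
  also have "\<dots> = (A 0 + (\<Sum>s\<le>N. A (Suc s))) - (\<Sum>s\<le>N. z * A s)"
    by (simp add: sum.distrib sum_negf sum_subtractf A_def[of 0])
  also have "A 0 + (\<Sum>s\<le>N. A (Suc s)) = (\<Sum>s\<le>Suc N. A s)"
    by (rule sum.atMost_Suc_shift[symmetric])
  also have "\<dots> = (\<Sum>s\<le>N. A s)"
    by (simp add: A_def qbinom_eq_0)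
  finally show ?case using lhs by simp
qed

subsection \<open>The q-Chu--Vandermonde sum and Bailey's lemma\<close>

definition vandermonde_term :: "real \<Rightarrow> nat \<Rightarrow> nat \<Rightarrow> nat \<Rightarrow> real" where
  "vandermonde_term q m a i = q^(i^2 + a * i) * qbinom q m i * qpoch q (a + i + 1) (m - i)"

lemma vandermonde_term_Suc_0:
  "vandermonde_term q (Suc m) a 0 = (1 - q^(a + 1)) * vandermonde_term q m (Suc a) 0"
  by (simp add: vandermonde_term_def qpoch_Suc_left)

lemma vandermonde_term_Suc_Suc:
  assumes "i \<le> m"
  shows "vandermonde_term q (Suc m) a (Suc i)
       = q^(a + 1 + i) * vandermonde_term q m (Suc a) i
         + (1 - q^(a + 1 + Suc i)) * vandermonde_term q m (Suc a) (Suc i)"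
proof -
  have exp_low: "(Suc i)^2 + a * Suc i = (i^2 + Suc a * i) + (a + 1 + i)"
    and exp_high: "(Suc i)^2 + a * Suc i + Suc i = (Suc i)^2 + Suc a * Suc i"
    by (simp_all add: power2_eq_square algebra_simps)
  have low: "q^((Suc i)^2 + a * Suc i) * qbinom q m i * qpoch q (a + Suc i + 1) (m - i)
      = q^(a + 1 + i) * vandermonde_term q m (Suc a) i"
    unfolding vandermonde_term_def exp_low power_add by (simp add: mult_ac)
  have high: "q^((Suc i)^2 + a * Suc i) * (q^Suc i * qbinom q m (Suc i)) * qpoch q (a + Suc i + 1) (m - i)
      = (1 - q^(a + 1 + Suc i)) * vandermonde_term q m (Suc a) (Suc i)"
  proof (cases "i = m")
    case True then show ?thesis by (simp add: vandermonde_term_def qbinom_eq_0)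
  next
    case False
    then have "m - i = Suc (m - Suc i)" using assms by simp
    then have "qpoch q (a + Suc i + 1) (m - i)
        = (1 - q^(a + 1 + Suc i)) * qpoch q (Suc a + Suc i + 1) (m - Suc i)"
      by (simp add: qpoch_Suc_left)
    moreover have "q^((Suc i)^2 + a * Suc i) * q^Suc i = q^((Suc i)^2 + Suc a * Suc i)"
      by (simp only: power_add[symmetric] exp_high)
    ultimately show ?thesis
      by (auto simp: vandermonde_term_def mult_ac)
  qed
  have "vandermonde_term q (Suc m) a (Suc i)
      = q^((Suc i)^2 + a * Suc i) * qbinom q m i * qpoch q (a + Suc i + 1) (m - i)
        + q^((Suc i)^2 + a * Suc i) * (q^Suc i * qbinom q m (Suc i)) * qpoch q (a + Suc i + 1) (m - i)"
    by (simp add: vandermonde_term_def algebra_simps)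
  then show ?thesis by (simp only: low high)
qed

lemma sum_vandermonde_term: "(\<Sum>i\<le>m. vandermonde_term q m a i) = 1"
proof (induction m arbitrary: a)
  case 0 then show ?case by (simp add: vandermonde_term_def)
next
  case (Suc m)
  define t where "t = vandermonde_term q m (Suc a)"
  have t_top: "t (Suc m) = 0" by (simp add: t_def vandermonde_term_def qbinom_eq_0)
  have "(\<Sum>i\<le>Suc m. vandermonde_term q (Suc m) a i)
      = vandermonde_term q (Suc m) a 0 + (\<Sum>i\<le>m. vandermonde_term q (Suc m) a (Suc i))"
    by (rule sum.atMost_Suc_shift)
  also have "\<dots> = (1 - q^(a + 1)) * t 0
      + (\<Sum>i\<le>m. q^(a + 1 + i) * t i + (1 - q^(a + 1 + Suc i)) * t (Suc i))"
    by (simp add: t_def vandermonde_term_Suc_0 vandermonde_term_Suc_Suc)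
  also have "\<dots> = (\<Sum>i\<le>m. q^(a + 1 + i) * t i)
      + ((1 - q^(a + 1)) * t 0 + (\<Sum>i\<le>m. (1 - q^(a + 1 + Suc i)) * t (Suc i)))"
    by (simp add: sum.distrib)
  also have "(1 - q^(a + 1)) * t 0 + (\<Sum>i\<le>m. (1 - q^(a + 1 + Suc i)) * t (Suc i))
      = (\<Sum>i\<le>m. (1 - q^(a + 1 + i)) * t i)"
    using sum.atMost_Suc_shift[of "\<lambda>i. (1 - q^(a + 1 + i)) * t i" m] by (simp add: t_top)
  also have "(\<Sum>i\<le>m. q^(a + 1 + i) * t i) + (\<Sum>i\<le>m. (1 - q^(a + 1 + i)) * t i) = (\<Sum>i\<le>m. t i)"
    by (simp add: sum.distrib[symmetric] algebra_simps)
  also have "\<dots> = 1" using Suc.IH by (simp add: t_def)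
  finally show ?case .
qed

lemma q_chu_vandermonde:
  assumes "0 < q" "q < 1"
  shows "(\<Sum>i\<le>m. q^(i^2 + a * i) / (qfact q i * qfact q (m - i) * qfact q (a + i)))
       = 1 / (qfact q m * qfact q (a + m))"
proof -
  have pos: "qfact q k > 0" for k using qfact_pos assms by auto
  have "(\<Sum>i\<le>m. q^(i^2 + a * i) / (qfact q i * qfact q (m - i) * qfact q (a + i)))
        * (qfact q m * qfact q (a + m)) = (\<Sum>i\<le>m. vandermonde_term q m a i)"
    unfolding sum_distrib_right
  proof (rule sum.cong)
    fix i assume "i \<in> {..m}"
    then have im: "i \<le> m" by simp
    have "qpoch q (a + i + 1) (m - i) = qfact q (a + m) / qfact q (a + i)"
      using qpoch_eq_qfact_div[OF assms, of "a + i" "m - i"] im by simp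
    then show "q^(i^2 + a * i) / (qfact q i * qfact q (m - i) * qfact q (a + i))
        * (qfact q m * qfact q (a + m)) = vandermonde_term q m a i"
      unfolding vandermonde_term_def qbinom_eq[OF assms im] using pos by (simp add: field_simps)
  qed simp
  also have "\<dots> = 1" by (rule sum_vandermonde_term)
  finally show ?thesis using pos[of m] pos[of "a + m"] by (simp add: eq_divide_eq)
qed

lemma q_chu_vandermonde_shifted:
  assumes "0 < q" "q < 1" "r \<le> n"
  shows "(\<Sum>j\<in>{r..n}. q^(j^2) / (qfact q (n - j) * qfact q (j - r) * qfact q (j + r)))
       = q^(r^2) / (qfact q (n - r) * qfact q (n + r))"
proof -
  define m where "m = n - r"
  have n: "n = m + r" using assms m_def by simp
  have "(\<Sum>j\<in>{r..n}. q^(j^2) / (qfact q (n - j) * qfact q (j - r) * qfact q (j + r)))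
      = (\<Sum>i\<in>{0..m}. q^((i + r)^2) / (qfact q (n - (i + r)) * qfact q (i + r - r) * qfact q (i + r + r)))"
    using sum.shift_bounds_cl_nat_ivl[of "\<lambda>j. q^(j^2) / (qfact q (n - j) * qfact q (j - r) * qfact q (j + r))" 0 r m]
    by (simp add: n)
  also have "\<dots> = q^(r^2) * (\<Sum>i\<le>m. q^(i^2 + (2 * r) * i) / (qfact q i * qfact q (m - i) * qfact q (2 * r + i)))"
    unfolding sum_distrib_left atLeast0AtMost
  proof (rule sum.cong)
    fix i
    have "(i + r)^2 = r^2 + (i^2 + 2 * r * i)" by (simp add: power2_eq_square algebra_simps)
    then show "q^((i + r)^2) / (qfact q (n - (i + r)) * qfact q (i + r - r) * qfact q (i + r + r))
        = q^(r^2) * (q^(i^2 + (2 * r) * i) / (qfact q i * qfact q (m - i) * qfact q (2 * r + i)))"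
      by (simp add: power_add n mult_2 mult_2_right algebra_simps)
  qed simp
  also have "\<dots> = q^(r^2) / (qfact q (n - r) * qfact q (n + r))"
    using q_chu_vandermonde[OF assms(1,2), of "2 * r" m] by (simp add: n mult_2 add_ac)
  finally show ?thesis .
qed

lemma sum_triangle_swap:
  "(\<Sum>j\<le>(n::nat). \<Sum>r\<le>j. g j r) = (\<Sum>r\<le>n. \<Sum>j\<in>{r..n}. g j r)"
  by (induction n) (simp_all add: sum.distrib atLeastAtMostSuc_conv add_ac)

theorem bailey_lemma:
  assumes "0 < q" "q < 1"
  shows "(\<Sum>j\<le>n. q^(j^2) / qfact q (n - j) * (\<Sum>r\<le>j. g r / (qfact q (j - r) * qfact q (j + r))))
       = (\<Sum>r\<le>n. g r * q^(r^2) / (qfact q (n - r) * qfact q (n + r)))"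
proof -
  have "(\<Sum>j\<le>n. q^(j^2) / qfact q (n - j) * (\<Sum>r\<le>j. g r / (qfact q (j - r) * qfact q (j + r))))
      = (\<Sum>r\<le>n. \<Sum>j\<in>{r..n}. g r * (q^(j^2) / (qfact q (n - j) * qfact q (j - r) * qfact q (j + r))))"
    by (simp add: sum_distrib_left field_simps flip: sum_triangle_swap)
  also have "\<dots> = (\<Sum>r\<le>n. g r * q^(r^2) / (qfact q (n - r) * qfact q (n + r)))"
  proof (rule sum.cong[OF refl])
    fix r assume "r \<in> {..n}"
    then have "r \<le> n" by simp
    then show "(\<Sum>j\<in>{r..n}. g r * (q^(j^2) / (qfact q (n - j) * qfact q (j - r) * qfact q (j + r))))
        = g r * q^(r^2) / (qfact q (n - r) * qfact q (n + r))"
      by (simp only: q_chu_vandermonde_shifted[OF assms \<open>r \<le> n\<close>] flip: sum_distrib_left) simp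
  qed
  finally show ?thesis .
qed

text \<open>The \<open>\<alpha>\<close>-sequence of the unit Bailey pair, whose \<open>\<beta>\<close>-sequence is \<open>\<beta>_n = (if n = 0 then 1 else 0)\<close>.\<close>

definition bailey_alpha :: "real \<Rightarrow> nat \<Rightarrow> real" where
  "bailey_alpha q r = (if r = 0 then 1 else (-1)^r * (q^(tri r) + q^(tri (Suc r))))"

lemma sum_atMost_double_split:
  "(\<Sum>s\<le>2 * j. f s) = (\<Sum>r\<le>j. f (j + r)) + (\<Sum>r<j. f (j - Suc r))"
proof -
  have "{..2 * j} = {..<j} \<union> {j..2 * j}" by auto
  then have "(\<Sum>s\<le>2 * j. f s) = (\<Sum>s<j. f s) + (\<Sum>s\<in>{j..2 * j}. f s)"
    by (subst sum.union_disjoint[symmetric]) auto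
  also have "(\<Sum>s\<in>{j..2 * j}. f s) = (\<Sum>r\<le>j. f (j + r))"
    using sum.shift_bounds_cl_nat_ivl[of f 0 j j] by (simp add: mult_2 atLeast0AtMost add.commute)
  also have "(\<Sum>s<j. f s) = (\<Sum>r<j. f (j - Suc r))"
    by (rule sum.nat_diff_reindex[symmetric])
  finally show ?thesis by (simp add: add.commute)
qed

lemma qbinomial_term_above_middle:
  assumes "0 < q"
  shows "(-1)^(j + r) * q^tri (j + r) * qbinom q N (j + r) * inverse (q^j)^(j + r)
       = ((-1)^j * q^tri j * inverse (q^(j * j))) * ((-1)^r * q^tri r * qbinom q N (j + r))"
proof -
  have "inverse (q^j)^(j + r) = inverse (q^(j * j)) * inverse (q^(j * r))"
    by (metis inverse_mult_distrib power_add power_inverse power_mult distrib_left)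
  then show ?thesis
    using assms by (simp add: tri_add power_add field_simps)
qed

lemma qbinomial_term_below_middle:
  assumes "0 < q" "q < 1" "r \<le> j"
  shows "(-1)^(j - r) * q^tri (j - r) * qbinom q (2 * j) (j - r) * inverse (q^j)^(j - r)
       = ((-1)^j * q^tri j * inverse (q^(j * j))) * ((-1)^r * q^tri (Suc r) * qbinom q (2 * j) (j + r))"
proof -
  define d where "d = j - r"
  have j: "j = d + r" using assms d_def by simp
  have "tri d + (d + r) * (d + r) = tri (d + r) + tri (Suc r) + (d + r) * d"
    using tri_double[of r] by (simp add: tri_add algebra_simps)
  then have "q^(tri d) * q^((d + r) * (d + r)) = q^(tri (d + r)) * q^(tri (Suc r)) * q^((d + r) * d)"
    by (metis power_add)
  moreover have "inverse (q^(d + r))^d = inverse (q^((d + r) * d))"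
    by (metis power_inverse power_mult)
  ultimately have pow: "q^tri d * inverse (q^(d + r))^d
      = q^tri (d + r) * inverse (q^((d + r) * (d + r))) * q^tri (Suc r)"
    using assms(1) by (simp add: field_simps)
  have "(-1::real)^r * (-1)^r = 1"
    by (simp flip: power_add)
  then have sign: "(-1::real)^d = (-1)^(d + r) * (-1)^r"
    by (simp add: power_add mult.assoc)
  have "qbinom q (2 * j) (j - r) = qbinom q (2 * j) (j + r)"
    using qbinom_symmetric[OF assms(1,2), of "j + r" "2 * j"] assms(3) by simp
  then show ?thesis
    unfolding d_def[symmetric] using pow sign by (simp add: j mult_ac)
qed

lemma sum_bailey_alpha_qbinom:
  assumes "0 < q" "q < 1" "1 \<le> j"
  shows "(\<Sum>r\<le>j. bailey_alpha q r * qbinom q (2 * j) (j + r)) = 0"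
proof -
  define T where "T s = (-1)^s * q^tri s * qbinom q (2 * j) s * inverse (q^j)^s" for s
  define K where "K = (-1)^j * q^tri j * inverse (q^(j * j))"
  define A where "A r = (-1)^r * q^tri r * qbinom q (2 * j) (j + r)" for r
  define B where "B r = (-1)^r * q^tri (Suc r) * qbinom q (2 * j) (j + r)" for r
  \<comment> \<open>the q-binomial theorem at \<open>z = q^(-j)\<close>, where the product has the factor \<open>1 - q^(-j) q^j\<close>\<close>
  have "(\<Prod>i<2 * j. 1 - inverse (q^j) * q^i) = 0"
    using assms by (intro prod_zero) (auto intro!: bexI[of _ j])
  then have "0 = (\<Sum>s\<le>2 * j. T s)"
    by (simp add: qbinomial_theorem T_def)
  also have "\<dots> = (\<Sum>r\<le>j. T (j + r)) + (\<Sum>r<j. T (j - Suc r))"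
    by (rule sum_atMost_double_split)
  also have "(\<Sum>r\<le>j. T (j + r)) = K * (\<Sum>r\<le>j. A r)"
    by (simp add: sum_distrib_left T_def K_def A_def qbinomial_term_above_middle[OF assms(1)])
  also have "(\<Sum>r<j. T (j - Suc r)) = K * (\<Sum>r<j. B (Suc r))"
    unfolding sum_distrib_left
    by (intro sum.cong refl) (simp add: T_def K_def B_def qbinomial_term_below_middle[OF assms(1,2)])
  finally have "K * ((\<Sum>r\<le>j. A r) + (\<Sum>r<j. B (Suc r))) = 0"
    by (simp add: distrib_left)
  moreover have "K \<noteq> 0" using assms by (simp add: K_def)
  moreover have "bailey_alpha q r * qbinom q (2 * j) (j + r) = A r + (if r = 0 then 0 else B r)" for r
    by (simp add: bailey_alpha_def A_def B_def algebra_simps)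
  then have "(\<Sum>r\<le>j. bailey_alpha q r * qbinom q (2 * j) (j + r)) = (\<Sum>r\<le>j. A r) + (\<Sum>r<j. B (Suc r))"
    by (simp add: sum.distrib sum.atMost_shift[of "\<lambda>r. if r = 0 then 0 else B r"])
  ultimately show ?thesis by simp
qed

lemma unit_bailey_pair:
  assumes "0 < q" "q < 1"
  shows "(\<Sum>r\<le>j. bailey_alpha q r / (qfact q (j - r) * qfact q (j + r))) = (if j = 0 then 1 else 0)"
proof (cases "j = 0")
  case True then show ?thesis by (simp add: bailey_alpha_def)
next
  case False
  have pos: "qfact q k > 0" for k using qfact_pos assms by auto
  have "(\<Sum>r\<le>j. bailey_alpha q r / (qfact q (j - r) * qfact q (j + r))) * qfact q (2 * j)
      = (\<Sum>r\<le>j. bailey_alpha q r * qbinom q (2 * j) (j + r))"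
    unfolding sum_distrib_right
  proof (rule sum.cong)
    fix r assume "r \<in> {..j}"
    then have "j + r \<le> 2 * j" by simp
    from qbinom_eq[OF assms this]
    show "bailey_alpha q r / (qfact q (j - r) * qfact q (j + r)) * qfact q (2 * j)
        = bailey_alpha q r * qbinom q (2 * j) (j + r)"
      using pos by (simp add: field_simps mult_2)
  qed simp
  also have "\<dots> = 0" using sum_bailey_alpha_qbinom[OF assms] False by simp
  finally show ?thesis using False pos[of "2 * j"] by simp
qed

lemma inverse_qfact_bailey_expansion:
  assumes "0 < q" "q < 1"
  shows "1 / qfact q n = (\<Sum>r\<le>n. bailey_alpha q r * q^(r^2) / (qfact q (n - r) * qfact q (n + r)))"
proof -
  have "(\<Sum>r\<le>n. bailey_alpha q r * q^(r^2) / (qfact q (n - r) * qfact q (n + r)))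
      = (\<Sum>j\<le>n. q^(j^2) / qfact q (n - j) * (\<Sum>r\<le>j. bailey_alpha q r / (qfact q (j - r) * qfact q (j + r))))"
    by (rule bailey_lemma[OF assms, symmetric])
  also have "\<dots> = 1 / qfact q n"
    by (simp add: unit_bailey_pair[OF assms] if_distrib cong: if_cong)
  finally show ?thesis by simp
qed

theorem finite_rogers_ramanujan:
  assumes "0 < q" "q < 1"
  shows "(\<Sum>j\<le>n. q^(j^2) / (qfact q j * qfact q (n - j)))
       = (\<Sum>r\<le>n. bailey_alpha q r * q^(2 * r^2) / (qfact q (n - r) * qfact q (n + r)))"
proof -
  have "(\<Sum>j\<le>n. q^(j^2) / (qfact q j * qfact q (n - j))) = (\<Sum>j\<le>n. q^(j^2) / qfact q (n - j) * (1 / qfact q j))"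
    by (simp add: field_simps)
  also have "\<dots> = (\<Sum>j\<le>n. q^(j^2) / qfact q (n - j)
      * (\<Sum>r\<le>j. (bailey_alpha q r * q^(r^2)) / (qfact q (j - r) * qfact q (j + r))))"
    by (simp add: inverse_qfact_bailey_expansion[OF assms])
  also have "\<dots> = (\<Sum>r\<le>n. (bailey_alpha q r * q^(r^2)) * q^(r^2) / (qfact q (n - r) * qfact q (n + r)))"
    by (rule bailey_lemma[OF assms])
  also have "\<dots> = (\<Sum>r\<le>n. bailey_alpha q r * q^(2 * r^2) / (qfact q (n - r) * qfact q (n + r)))"
    by (simp add: mult_2 power_add mult.assoc)
  finally show ?thesis .
qed

subsection \<open>The polynomial identity and its coefficient of \<open>q^n\<close>\<close>

definition qpoch_poly :: "nat \<Rightarrow> nat \<Rightarrow> real poly" where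
  "qpoch_poly s m = (\<Prod>k\<in>{s..<s+m}. 1 - monom 1 k)"

definition bailey_alpha_poly :: "nat \<Rightarrow> real poly" where
  "bailey_alpha_poly r =
     (if r = 0 then 1 else monom ((-1)^r) (tri r) + monom ((-1)^r) (tri (Suc r)))"

text \<open>The two sides of \<open>finite_rogers_ramanujan\<close> multiplied by \<open>(q;q)_n (q;q)_(2n)\<close>,
  which turns them into polynomials.\<close>

definition rr_lhs_poly :: "nat \<Rightarrow> real poly" where
  "rr_lhs_poly n = (\<Sum>j\<le>n. monom 1 (j^2) * qpoch_poly (j + 1) (n - j) * qpoch_poly (n - j + 1) (n + j))"

definition rr_rhs_poly :: "nat \<Rightarrow> real poly" where
  "rr_rhs_poly n = (\<Sum>r\<le>n. monom 1 (2 * r^2) * bailey_alpha_poly r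
      * qpoch_poly (n - r + 1) r * qpoch_poly (n + r + 1) (n - r))"

lemma poly_qpoch_poly: "poly (qpoch_poly s m) q = qpoch q s m"
  by (simp add: qpoch_poly_def qpoch_def poly_prod poly_monom)

lemma poly_bailey_alpha_poly: "poly (bailey_alpha_poly r) q = bailey_alpha q r"
  by (simp add: bailey_alpha_poly_def bailey_alpha_def poly_monom algebra_simps)

lemma poly_rr_lhs_eq_rhs:
  assumes "0 < q" "q < 1"
  shows "poly (rr_lhs_poly n) q = poly (rr_rhs_poly n) q"
proof -
  note pochs = qpoch_eq_qfact_div[OF assms]
  have "poly (rr_lhs_poly n) q
      = (\<Sum>j\<le>n. q^(j^2) * (qfact q n / qfact q j) * (qfact q (2 * n) / qfact q (n - j)))"
    unfolding rr_lhs_poly_def poly_sum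
    by (intro sum.cong refl) (simp add: poly_qpoch_poly poly_monom pochs mult_2)
  also have "\<dots> = qfact q n * qfact q (2 * n) * (\<Sum>j\<le>n. q^(j^2) / (qfact q j * qfact q (n - j)))"
    by (simp add: sum_distrib_left field_simps)
  also have "\<dots> = qfact q n * qfact q (2 * n)
      * (\<Sum>r\<le>n. bailey_alpha q r * q^(2 * r^2) / (qfact q (n - r) * qfact q (n + r)))"
    by (simp add: finite_rogers_ramanujan[OF assms])
  also have "\<dots> = (\<Sum>r\<le>n. q^(2 * r^2) * bailey_alpha q r
      * (qfact q n / qfact q (n - r)) * (qfact q (2 * n) / qfact q (n + r)))"
    by (simp add: sum_distrib_left field_simps)
  also have "\<dots> = poly (rr_rhs_poly n) q"
    unfolding rr_rhs_poly_def poly_sum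
    by (intro sum.cong refl) (simp add: poly_qpoch_poly poly_monom poly_bailey_alpha_poly pochs mult_2)
  finally show ?thesis .
qed

lemma poly_eqI_on_Ioo:
  fixes p p' :: "real poly"
  assumes "\<And>x. a < x \<Longrightarrow> x < b \<Longrightarrow> poly p x = poly p' x" and "a < b"
  shows "p = p'"
proof (rule ccontr)
  assume "p \<noteq> p'"
  then have "finite {x. poly (p - p') x = 0}"
    by (intro poly_roots_finite) simp
  moreover have "{a<..<b} \<subseteq> {x. poly (p - p') x = 0}"
    using assms(1) by auto
  ultimately show False
    using infinite_Ioo[OF assms(2)] finite_subset by blast
qed

lemma rr_poly_identity: "rr_lhs_poly n = rr_rhs_poly n"
  by (rule poly_eqI_on_Ioo[of 0 1]) (simp_all add: poly_rr_lhs_eq_rhs)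

lemma qpoch_poly_eq_1_plus_monom: "\<exists>w. qpoch_poly s m = 1 + monom 1 s * w"
proof (induction m)
  case 0 then show ?case by (auto simp: qpoch_poly_def intro: exI[of _ 0])
next
  case (Suc m)
  then obtain w where w: "qpoch_poly s m = 1 + monom 1 s * w" by blast
  have "qpoch_poly s (Suc m) = qpoch_poly s m * (1 - monom 1 (s + m))"
    by (simp add: qpoch_poly_def)
  also have "\<dots> = (1 + monom 1 s * w) * (1 - monom 1 s * monom 1 m)"
    by (simp add: w mult_monom)
  also have "\<dots> = 1 + monom 1 s * (w - monom 1 m - monom 1 m * monom 1 s * w)"
    by (simp add: algebra_simps)
  finally show ?case by blast
qed

lemma coeff_mult_qpoch_poly_low:
  assumes "i < a + s"
  shows "coeff (monom 1 a * Y * qpoch_poly s m) i = coeff (monom 1 a * Y) i"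
proof -
  obtain w where w: "qpoch_poly s m = 1 + monom 1 s * w"
    using qpoch_poly_eq_1_plus_monom by blast
  have "monom 1 a * Y * qpoch_poly s m = monom 1 a * Y + monom 1 s * (monom 1 a * (Y * w))"
    by (simp add: w algebra_simps)
  moreover have "coeff (monom 1 s * (monom 1 a * (Y * w))) i = 0"
    using assms by (simp add: coeff_monom_mult) arith
  ultimately show ?thesis by simp
qed

lemma coeff_rr_lhs_poly:
  "coeff (rr_lhs_poly n) n = (\<Sum>j\<le>n. coeff (monom 1 (j^2) * qpoch_poly (j + 1) (n - j)) n)"
  unfolding rr_lhs_poly_def coeff_sum
proof (rule sum.cong[OF refl])
  fix j :: nat
  have "j \<le> j^2" by (simp add: power2_eq_square)
  then show "coeff (monom 1 (j^2) * qpoch_poly (j + 1) (n - j) * qpoch_poly (n - j + 1) (n + j)) n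
      = coeff (monom 1 (j^2) * qpoch_poly (j + 1) (n - j)) n"
    by (intro coeff_mult_qpoch_poly_low) simp
qed

lemma coeff_rr_rhs_poly:
  "coeff (rr_rhs_poly n) n = (\<Sum>r\<le>n. coeff (monom 1 (2 * r^2) * bailey_alpha_poly r) n)"
  unfolding rr_rhs_poly_def coeff_sum
proof (rule sum.cong[OF refl])
  fix r assume "r \<in> {..n}"
  moreover have "r \<le> 2 * r^2" by (simp add: power2_eq_square)
  ultimately have "n < 2 * r^2 + (n + r + 1)" "n < 2 * r^2 + (n - r + 1)" by auto
  then show "coeff (monom 1 (2 * r^2) * bailey_alpha_poly r
        * qpoch_poly (n - r + 1) r * qpoch_poly (n + r + 1) (n - r)) n
      = coeff (monom 1 (2 * r^2) * bailey_alpha_poly r) n"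
    using coeff_mult_qpoch_poly_low[of n "2 * r^2" "n + r + 1" "bailey_alpha_poly r * qpoch_poly (n - r + 1) r"]
      coeff_mult_qpoch_poly_low[of n "2 * r^2" "n - r + 1" "bailey_alpha_poly r"]
    by (simp add: mult.assoc)
qed

lemma prod_uminus_monom:
  "finite X \<Longrightarrow> (\<Prod>x\<in>X. - monom (1::real) x) = monom ((-1)^card X) (\<Sum>X)"
  by (induction X rule: finite_induct) (simp_all add: mult_monom minus_monom)

lemma qpoch_poly_eq_sum_Pow:
  "qpoch_poly s m = (\<Sum>X\<in>Pow {s..<s+m}. monom ((-1)^card X) (\<Sum>X))"
proof -
  have "qpoch_poly s m = (\<Prod>k\<in>{s..<s+m}. - monom 1 k + 1)"
    by (simp add: qpoch_poly_def)
  also have "\<dots> = (\<Sum>X\<in>Pow {s..<s+m}. (\<Prod>x\<in>X. - monom 1 x) * (\<Prod>x\<in>{s..<s+m} - X. 1))"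
    by (rule prod_add) simp
  also have "\<dots> = (\<Sum>X\<in>Pow {s..<s+m}. monom ((-1)^card X) (\<Sum>X))"
    by (intro sum.cong refl) (auto simp: prod_uminus_monom finite_subset)
  finally show ?thesis .
qed

lemma coeff_monom_mult_qpoch_poly:
  "coeff (monom 1 a * qpoch_poly s m) i = (\<Sum>X | X \<subseteq> {s..<s+m} \<and> a + \<Sum>X = i. (-1)^card X)"
proof -
  have "coeff (monom 1 a * qpoch_poly s m) i
      = (\<Sum>X\<in>Pow {s..<s+m}. if a + \<Sum>X = i then (-1)^card X else 0)"
    by (simp add: qpoch_poly_eq_sum_Pow sum_distrib_left mult_monom coeff_sum)
  also have "\<dots> = (\<Sum>X | X \<subseteq> {s..<s+m} \<and> a + \<Sum>X = i. (-1)^card X)"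
    by (subst sum.inter_filter[symmetric]) (simp_all add: Pow_def conj_commute)
  finally show ?thesis .
qed

subsection \<open>The exponents \<open>(5j^2 + j)/2\<close>\<close>

definition rr_exp_minus :: "nat \<Rightarrow> nat" where
  "rr_exp_minus r = 2 * r^2 + tri r"

definition rr_exp_plus :: "nat \<Rightarrow> nat" where
  "rr_exp_plus r = 2 * r^2 + tri (Suc r)"

definition rr_coeff :: "nat \<Rightarrow> nat \<Rightarrow> int" where
  "rr_coeff r n = (if r = 0 then of_bool (n = 0)
     else (-1)^r * (of_bool (n = rr_exp_minus r) + of_bool (n = rr_exp_plus r)))"

lemma coeff_monom_mult_bailey_alpha_poly:
  "coeff (monom 1 (2 * r^2) * bailey_alpha_poly r) n = of_int (rr_coeff r n)"
proof (cases "r = 0")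
  case True then show ?thesis by (simp add: bailey_alpha_poly_def rr_coeff_def)
next
  case False
  then have "monom 1 (2 * r^2) * bailey_alpha_poly r
      = monom ((-1)^r) (rr_exp_minus r) + monom ((-1)^r) (rr_exp_plus r)"
    by (simp add: bailey_alpha_poly_def rr_exp_minus_def rr_exp_plus_def distrib_left mult_monom)
  then show ?thesis using False by (simp add: rr_coeff_def)
qed

lemma two_tri_int: "2 * int (tri r) + int r = int r * int r"
  using tri_double[of r] by (metis of_nat_add of_nat_mult of_nat_numeral)

lemma two_rr_exp_minus: "2 * int (rr_exp_minus r) = 5 * (- int r)^2 + (- int r)"
  using two_tri_int[of r] by (simp add: rr_exp_minus_def power2_eq_square algebra_simps)

lemma two_rr_exp_plus: "2 * int (rr_exp_plus r) = 5 * int r^2 + int r"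
  using two_tri_int[of r] by (simp add: rr_exp_plus_def power2_eq_square algebra_simps)

lemma five_square_plus_inj:
  fixes j k :: int
  assumes "5 * j^2 + j = 5 * k^2 + k"
  shows "j = k"
proof -
  have "(j - k) * (5 * (j + k) + 1) = 0"
    using assms by (simp add: power2_eq_square algebra_simps)
  moreover have "5 * (j + k) + 1 \<noteq> 0" by presburger
  ultimately show ?thesis by simp
qed

lemma eq_iff_five_square_plus_eq:
  fixes j k :: int
  assumes "2 * int n = 5 * j^2 + j" "2 * int m = 5 * k^2 + k"
  shows "n = m \<longleftrightarrow> j = k"
proof -
  have "n = m \<longleftrightarrow> 2 * int n = 2 * int m" by simp
  also have "\<dots> \<longleftrightarrow> 5 * j^2 + j = 5 * k^2 + k" using assms by simp
  also have "\<dots> \<longleftrightarrow> j = k" using five_square_plus_inj by blast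
  finally show ?thesis .
qed

lemma sum_rr_coeff_pentagonal:
  assumes j: "2 * int n = 5 * j^2 + j"
  shows "(\<Sum>r\<le>n. rr_coeff r n) = (-1)^nat \<bar>j\<bar>"
proof -
  have minus: "n = rr_exp_minus r \<longleftrightarrow> j = - int r" for r
    by (rule eq_iff_five_square_plus_eq[OF j two_rr_exp_minus])
  have plus: "n = rr_exp_plus r \<longleftrightarrow> j = int r" for r
    by (rule eq_iff_five_square_plus_eq[OF j two_rr_exp_plus])
  have zero: "n = 0 \<longleftrightarrow> j = 0"
    using eq_iff_five_square_plus_eq[OF j, of 0 0] by simp
  have "rr_coeff r n = (if r = nat \<bar>j\<bar> then (-1)^nat \<bar>j\<bar> else 0)" for r
    unfolding rr_coeff_def minus plus zero by auto
  moreover have "nat \<bar>j\<bar> \<le> n"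
  proof -
    have "\<bar>j\<bar> \<le> j^2"
      by (metis abs_0_eq abs_dvd_iff dvd_triv_right power2_eq_square zdvd_imp_le zero_le_power2 zero_less_power2)
    then have "\<bar>j\<bar> \<le> int n" using j by (auto simp: abs_if)
    then show ?thesis by (simp add: nat_le_iff)
  qed
  ultimately show ?thesis by simp
qed

lemma sum_rr_coeff_non_pentagonal:
  assumes "\<nexists>j::int. 2 * int n = 5 * j^2 + j"
  shows "(\<Sum>r\<le>n. rr_coeff r n) = 0"
proof -
  have minus: "n \<noteq> rr_exp_minus r" for r
    using assms two_rr_exp_minus[of r] by metis
  have plus: "n \<noteq> rr_exp_plus r" for r
    using assms two_rr_exp_plus[of r] by metis
  have zero: "n \<noteq> 0"
    using assms by (metis mult_zero_right of_nat_0 power_zero_numeral add_0)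
  show ?thesis
    by (rule sum.neutral) (simp add: rr_coeff_def minus plus zero)
qed

lemma odd_sum_rr_coeff_iff: "odd (\<Sum>r\<le>n. rr_coeff r n) \<longleftrightarrow> (\<exists>j::int. 2 * int n = 5 * j^2 + j)"
proof (cases "\<exists>j::int. 2 * int n = 5 * j^2 + j")
  case True
  then obtain j :: int where "2 * int n = 5 * j^2 + j" by blast
  then have "odd (\<Sum>r\<le>n. rr_coeff r n)" by (simp add: sum_rr_coeff_pentagonal)
  then show ?thesis using True by simp
next
  case False
  then show ?thesis by (simp add: sum_rr_coeff_non_pentagonal)
qed

subsection \<open>Signed and unsigned counts of sets of distinct parts\<close>

definition sq_plus_distinct :: "nat \<Rightarrow> nat \<Rightarrow> nat set set" where
  "sq_plus_distinct n j = {X. X \<subseteq> {j+1..n} \<and> j^2 + \<Sum>X = n}"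

lemma finite_sq_plus_distinct: "finite (sq_plus_distinct n j)"
  by (rule finite_subset[of _ "Pow {j+1..n}"]) (auto simp: sq_plus_distinct_def)

lemma sum_signed_sq_plus_distinct:
  "(\<Sum>j\<le>n. \<Sum>X\<in>sq_plus_distinct n j. (-1::int)^card X) = (\<Sum>r\<le>n. rr_coeff r n)"
proof -
  have "{j + 1..<j + 1 + (n - j)} = {j + 1..n}" if "j \<le> n" for j
    using that by auto
  then have "real_of_int (\<Sum>j\<le>n. \<Sum>X\<in>sq_plus_distinct n j. (-1)^card X) = coeff (rr_lhs_poly n) n"
    by (simp add: coeff_rr_lhs_poly coeff_monom_mult_qpoch_poly sq_plus_distinct_def)
  also have "\<dots> = coeff (rr_rhs_poly n) n"
    by (simp add: rr_poly_identity)
  also have "\<dots> = real_of_int (\<Sum>r\<le>n. rr_coeff r n)"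
    by (simp add: coeff_rr_rhs_poly coeff_monom_mult_bailey_alpha_poly)
  finally show ?thesis by (simp only: of_int_eq_iff)
qed

lemma even_sum_signs_minus_card: "even ((\<Sum>X\<in>S. (-1::int)^card X) - int (card S))"
proof (cases "finite S")
  case True
  have "even ((-1::int)^card (X :: 'a set) - 1)" for X
    by (cases "even (card X)") auto
  then have "even (\<Sum>X\<in>S. (-1::int)^card X - 1)"
    by (simp add: dvd_sum)
  then show ?thesis by (simp add: sum_subtractf)
qed simp

lemma odd_sum_card_sq_plus_distinct_iff:
  "odd (\<Sum>j\<le>n. card (sq_plus_distinct n j)) \<longleftrightarrow> (\<exists>j::int. 2 * int n = 5 * j^2 + j)"
proof -
  have "even (\<Sum>j\<le>n. (\<Sum>X\<in>sq_plus_distinct n j. (-1::int)^card X) - int (card (sq_plus_distinct n j)))"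
    by (intro dvd_sum even_sum_signs_minus_card)
  then have "even ((\<Sum>j\<le>n. \<Sum>X\<in>sq_plus_distinct n j. (-1::int)^card X) - (\<Sum>j\<le>n. int (card (sq_plus_distinct n j))))"
    by (simp only: sum_subtractf)
  then have "odd (\<Sum>j\<le>n. int (card (sq_plus_distinct n j))) \<longleftrightarrow> odd (\<Sum>r\<le>n. rr_coeff r n)"
    unfolding sum_signed_sq_plus_distinct by (metis even_add diff_add_cancel)
  then show ?thesis by (simp add: odd_sum_rr_coeff_iff flip: of_nat_sum)
qed

subsection \<open>Partitions counted by \<open>c9\<close>\<close>

definition distinct_ge2 :: "nat \<Rightarrow> nat set set" where
  "distinct_ge2 n = {X. X \<subseteq> {2..n} \<and> \<Sum>X = n}"

definition cond_b_mset :: "nat \<Rightarrow> nat set \<Rightarrow> nat multiset" where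
  "cond_b_mset j X = replicate_mset (j^2) 1 + mset_set X"

lemma sum_mset_mset_set: "sum_mset (mset_set X) = (\<Sum>X :: 'a::comm_monoid_add)"
  using sum_unfold_sum_mset[of "\<lambda>x. x" X] by simp

lemma mset_set_set_mset_eq: "(\<And>x. x \<in># p \<Longrightarrow> count p x = 1) \<Longrightarrow> mset_set (set_mset p) = p"
  by (rule multiset_eqI) (auto simp: count_mset_set' not_in_iff)

lemma cond_a_partitions_eq: "{p. is_partition p n \<and> c9_cond_a p} = mset_set ` distinct_ge2 n"
proof (intro set_eqI iffI)
  fix p assume "p \<in> {p. is_partition p n \<and> c9_cond_a p}"
  then have p: "is_partition p n" "c9_cond_a p" by auto
  then have eq: "mset_set (set_mset p) = p"
    by (intro mset_set_set_mset_eq) (simp add: c9_cond_a_def)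
  then have sum: "\<Sum>(set_mset p) = n"
    using p(1) sum_mset_mset_set[of "set_mset p"] by (simp add: is_partition_def)
  have "set_mset p \<subseteq> {2..n}"
  proof
    fix x assume x: "x \<in> set_mset p"
    then have "x \<le> \<Sum>(set_mset p)" by (intro member_le_sum) auto
    then show "x \<in> {2..n}" using x p(2) sum by (auto simp: c9_cond_a_def)
  qed
  with eq sum show "p \<in> mset_set ` distinct_ge2 n"
    unfolding distinct_ge2_def by (intro image_eqI[of p _ "set_mset p"]) auto
next
  fix p assume "p \<in> mset_set ` distinct_ge2 n"
  then obtain X where X: "X \<subseteq> {2..n}" "\<Sum>X = n" "p = mset_set X"
    by (auto simp: distinct_ge2_def)
  moreover have "finite X" using X(1) finite_subset by blast
  ultimately show "p \<in> {p. is_partition p n \<and> c9_cond_a p}"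
    by (auto simp: is_partition_def c9_cond_a_def sum_mset_mset_set)
qed

lemma card_cond_a_partitions: "card {p. is_partition p n \<and> c9_cond_a p} = card (distinct_ge2 n)"
proof -
  have "inj_on mset_set (distinct_ge2 n)"
    by (rule inj_onI) (metis (no_types, lifting) distinct_ge2_def finite_atLeastAtMost
        finite_set_mset_mset_set finite_subset mem_Collect_eq)
  then show ?thesis unfolding cond_a_partitions_eq by (rule card_image)
qed

lemma cond_b_partition_decomp:
  assumes "c9_cond_b p" "is_partition p n"
  obtains j X where "2 \<le> j" "X \<in> sq_plus_distinct n j" "p = cond_b_mset j X"
proof -
  from assms(1) obtain j where j: "2 \<le> j" "count p 1 = j^2"
    and parts: "\<And>x. x \<in># p \<Longrightarrow> x \<noteq> 1 \<Longrightarrow> j + 1 \<le> x \<and> count p x \<le> 1"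
    by (auto simp: c9_cond_b_def)
  define X where "X = set_mset p - {1}"
  have p: "p = cond_b_mset j X"
  proof (rule multiset_eqI)
    fix x
    have "count p x = 1" if "x \<in># p" "x \<noteq> 1"
    proof -
      have "0 < count p x" using that(1) by simp
      then show ?thesis using parts[OF that] by linarith
    qed
    then show "count p x = count (cond_b_mset j X) x"
      using j(2) by (cases "x = 1") (auto simp: cond_b_mset_def X_def count_mset_set' not_in_iff)
  qed
  have sum: "j^2 + \<Sum>X = n"
    using assms(2) p by (simp add: is_partition_def cond_b_mset_def sum_mset_mset_set)
  have "X \<subseteq> {j+1..n}"
  proof
    fix x assume x: "x \<in> X"
    then have "x \<le> \<Sum>X" by (intro member_le_sum) (auto simp: X_def)
    then show "x \<in> {j+1..n}" using x parts sum by (auto simp: X_def)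
  qed
  with sum have "X \<in> sq_plus_distinct n j" by (simp add: sq_plus_distinct_def)
  then show ?thesis by (rule that[OF j(1) _ p])
qed

lemma cond_b_mset_partition:
  assumes "2 \<le> j" "X \<in> sq_plus_distinct n j"
  shows "is_partition (cond_b_mset j X) n" "c9_cond_b (cond_b_mset j X)"
proof -
  have X: "X \<subseteq> {j+1..n}" "j^2 + \<Sum>X = n" using assms(2) by (auto simp: sq_plus_distinct_def)
  then have fin: "finite X" using finite_subset by blast
  show "is_partition (cond_b_mset j X) n"
    using X fin by (auto simp: is_partition_def cond_b_mset_def sum_mset_mset_set)
  show "c9_cond_b (cond_b_mset j X)"
    unfolding c9_cond_b_def
    using assms(1) X fin by (intro exI[of _ j]) (auto simp: cond_b_mset_def count_mset_set')
qed

lemma cond_b_partitions_eq: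
  "{p. is_partition p n \<and> c9_cond_b p}
     = (\<lambda>(j, X). cond_b_mset j X) ` (SIGMA j:{2..n}. sq_plus_distinct n j)"
proof (intro set_eqI iffI)
  fix p assume "p \<in> {p. is_partition p n \<and> c9_cond_b p}"
  then obtain j X where jX: "2 \<le> j" "X \<in> sq_plus_distinct n j" "p = cond_b_mset j X"
    using cond_b_partition_decomp by blast
  then have "j \<le> n"
    by (auto simp: sq_plus_distinct_def power2_eq_square intro: trans_le_add1 le_square)
  with jX show "p \<in> (\<lambda>(j, X). cond_b_mset j X) ` (SIGMA j:{2..n}. sq_plus_distinct n j)"
    by force
next
  fix p assume "p \<in> (\<lambda>(j, X). cond_b_mset j X) ` (SIGMA j:{2..n}. sq_plus_distinct n j)"
  then show "p \<in> {p. is_partition p n \<and> c9_cond_b p}"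
    using cond_b_mset_partition by auto
qed

lemma card_cond_b_partitions:
  "card {p. is_partition p n \<and> c9_cond_b p} = (\<Sum>j\<in>{2..n}. card (sq_plus_distinct n j))"
proof -
  let ?f = "\<lambda>(j, X). cond_b_mset j X"
  have "inj_on ?f (SIGMA j:{2..n}. sq_plus_distinct n j)"
  proof (rule inj_onI)
    fix a b
    assume "a \<in> (SIGMA j:{2..n}. sq_plus_distinct n j)" "b \<in> (SIGMA j:{2..n}. sq_plus_distinct n j)"
      and "?f a = ?f b"
    then obtain j X j' X' where ab: "a = (j, X)" "b = (j', X')"
      and "j \<in> {2..n}" "X \<in> sq_plus_distinct n j" "j' \<in> {2..n}" "X' \<in> sq_plus_distinct n j'"
      and eq: "cond_b_mset j X = cond_b_mset j' X'"
      by auto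
    then have fin: "finite X" "finite X'" and no1: "1 \<notin> X" "1 \<notin> X'"
      by (auto simp: sq_plus_distinct_def intro: finite_subset)
    have "j^2 = j'^2"
      using arg_cong[OF eq, of "\<lambda>p. count p 1"] fin no1 by (simp add: cond_b_mset_def)
    then have "j = j'" by simp
    with eq fin ab show "a = b" by (simp add: cond_b_mset_def)
  qed
  then show ?thesis
    by (simp add: cond_b_partitions_eq card_image finite_sq_plus_distinct)
qed

lemma sq_plus_distinct_0_eq:
  "sq_plus_distinct n 0 = distinct_ge2 n \<union> insert 1 ` sq_plus_distinct n 1"
proof (intro equalityI subsetI)
  fix X assume X: "X \<in> sq_plus_distinct n 0"
  then have fin: "finite X" and sub: "X \<subseteq> {1..n}" and sum: "\<Sum>X = n"
    by (auto simp: sq_plus_distinct_def intro: finite_subset)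
  show "X \<in> distinct_ge2 n \<union> insert 1 ` sq_plus_distinct n 1"
  proof (cases "1 \<in> X")
    case True
    then have "\<Sum>X = 1 + \<Sum>(X - {1})" using fin by (simp add: sum.remove)
    then have "X - {1} \<in> sq_plus_distinct n 1"
      using sub sum by (auto simp: sq_plus_distinct_def)
    moreover have "X = insert 1 (X - {1})" using True by blast
    ultimately show ?thesis by blast
  next
    case False
    have "X \<subseteq> {2..n}"
    proof
      fix x assume "x \<in> X"
      then have "x \<in> {1..n}" "x \<noteq> 1" using sub False by auto
      then show "x \<in> {2..n}" by simp
    qed
    then have "X \<in> distinct_ge2 n" using sum by (simp add: distinct_ge2_def)
    then show ?thesis by blast
  qed
next
  fix X assume "X \<in> distinct_ge2 n \<union> insert 1 ` sq_plus_distinct n 1"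
  then show "X \<in> sq_plus_distinct n 0"
  proof
    assume "X \<in> distinct_ge2 n"
    then show ?thesis by (auto simp: distinct_ge2_def sq_plus_distinct_def)
  next
    assume "X \<in> insert 1 ` sq_plus_distinct n 1"
    then obtain Y where "Y \<in> sq_plus_distinct n 1" and X: "X = insert 1 Y"
      by blast
    then have Y: "Y \<subseteq> {2..n}" "1 + \<Sum>Y = n"
      by (simp_all add: sq_plus_distinct_def numeral_2_eq_2)
    moreover have "finite Y" "1 \<notin> Y" using Y(1) finite_subset by auto
    ultimately show ?thesis by (auto simp: sq_plus_distinct_def X)
  qed
qed

lemma card_sq_plus_distinct_0:
  "card (sq_plus_distinct n 0) = card (distinct_ge2 n) + card (sq_plus_distinct n 1)"
proof -
  have no1: "1 \<notin> X" if "X \<in> sq_plus_distinct n 1 \<or> X \<in> distinct_ge2 n" for X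
    using that by (auto simp: sq_plus_distinct_def distinct_ge2_def)
  have "inj_on (insert 1) (sq_plus_distinct n 1)"
    by (rule inj_onI) (metis Diff_insert_absorb no1)
  moreover have "distinct_ge2 n \<inter> insert 1 ` sq_plus_distinct n 1 = {}"
    using no1 by blast
  moreover have "finite (distinct_ge2 n)"
    by (rule finite_subset[of _ "Pow {2..n}"]) (auto simp: distinct_ge2_def)
  ultimately show ?thesis
    by (simp add: sq_plus_distinct_0_eq card_Un_disjoint card_image finite_sq_plus_distinct)
qed

lemma c9_plus_twice_card_eq_sum:
  "c9 n + 2 * card (sq_plus_distinct n 1) = (\<Sum>j\<le>n. card (sq_plus_distinct n j))"
proof -
  have disj: "{p. is_partition p n \<and> c9_cond_a p} \<inter> {p. is_partition p n \<and> c9_cond_b p} = {}"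
    by (auto simp: c9_cond_a_def c9_cond_b_def simp flip: count_greater_zero_iff)
  have fin_a: "finite {p. is_partition p n \<and> c9_cond_a p}"
    unfolding cond_a_partitions_eq
    by (rule finite_imageI, rule finite_subset[of _ "Pow {2..n}"]) (auto simp: distinct_ge2_def)
  have fin_b: "finite {p. is_partition p n \<and> c9_cond_b p}"
    by (simp add: cond_b_partitions_eq finite_sq_plus_distinct)
  have "{p. is_partition p n \<and> (c9_cond_a p \<or> c9_cond_b p)}
      = {p. is_partition p n \<and> c9_cond_a p} \<union> {p. is_partition p n \<and> c9_cond_b p}"
    by auto
  then have "c9 n = card (distinct_ge2 n) + (\<Sum>j\<in>{2..n}. card (sq_plus_distinct n j))"
    by (simp add: c9_def card_Un_disjoint[OF fin_a fin_b disj] card_cond_a_partitions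
        card_cond_b_partitions)
  moreover have "(\<Sum>j\<le>n. card (sq_plus_distinct n j))
      = card (sq_plus_distinct n 0) + card (sq_plus_distinct n 1) + (\<Sum>j\<in>{2..n}. card (sq_plus_distinct n j))"
  proof (cases "n = 0")
    case True
    have "sq_plus_distinct 0 1 = {}" by (auto simp: sq_plus_distinct_def)
    then show ?thesis using True by simp
  next
    case False
    then have "{..n} = {0, 1} \<union> {2..n}" by auto
    then show ?thesis by (simp add: sum.union_disjoint)
  qed
  ultimately show ?thesis by (simp add: card_sq_plus_distinct_0)
qed

theorem theorem10:
  fixes n :: nat
  shows "odd (c9 n) \<longleftrightarrow> (\<exists>j::int. 2 * int n = 5 * j^2 + j)"
proof -
  have "odd (c9 n) \<longleftrightarrow> odd (c9 n + 2 * card (sq_plus_distinct n 1))" by simp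
  also have "\<dots> \<longleftrightarrow> odd (\<Sum>j\<le>n. card (sq_plus_distinct n j))"
    by (simp only: c9_plus_twice_card_eq_sum)
  also have "\<dots> \<longleftrightarrow> (\<exists>j::int. 2 * int n = 5 * j^2 + j)"
    by (rule odd_sum_card_sq_plus_distinct_iff)
  finally show ?thesis .
qed

end
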